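(* Let $G$ be a connected bipartite graph with $n\ge 2$ vertices and diameter $D$. Then $$EE(G) \ge 2\cosh\sqrt[D]{n-1} + (n-2),$$ with equality if and only if $G\cong S_n$.
   Context: All graphs are finite, simple and undirected. For a graph $G$ with adjacency matrix $A(G)$ having eigenvalues $\lambda_1\ge\cdots\ge\lambda_n$, the Estrada index is $EE(G)=\sum_{i=1}^n e^{\lambda_i}$. The diameter $D$ is the maximum over all pairs of vertices of the length of a shortest path between them. $S_n=K_{1,n-1}$ is the star on $n$ vertices. *)

theory Defs
  imports "Jordan_Normal_Form.Char_Poly"
begin

definition simple_graph :: "nat \<Rightarrow> (nat \<Rightarrow> nat \<Rightarrow> bool) \<Rightarrow> bool" where
  "simple_graph n E \<longleftrightarrow> (\<forall>u v. E u v \<longrightarrow> E v u) \<and> (\<forall>u. \<not> E u u)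
     \<and> (\<forall>u v. E u v \<longrightarrow> u < n \<and> v < n)"

definition adj_mat :: "nat \<Rightarrow> (nat \<Rightarrow> nat \<Rightarrow> bool) \<Rightarrow> real mat" where
  "adj_mat n E = mat n n (\<lambda>(i, j). if E i j then 1 else 0)"

definition adj_eigenvalues :: "nat \<Rightarrow> (nat \<Rightarrow> nat \<Rightarrow> bool) \<Rightarrow> complex list" where
  "adj_eigenvalues n E = (SOME es. length es = n \<and>
     char_poly (map_mat complex_of_real (adj_mat n E)) = (\<Prod>a\<leftarrow>es. [:- a, 1:]))"

definition estrada_index :: "nat \<Rightarrow> (nat \<Rightarrow> nat \<Rightarrow> bool) \<Rightarrow> real" where
  "estrada_index n E = Re (\<Sum>e\<leftarrow>adj_eigenvalues n E. exp e)"

definition is_walk :: "nat \<Rightarrow> (nat \<Rightarrow> nat \<Rightarrow> bool) \<Rightarrow> nat list \<Rightarrow> bool" where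
  "is_walk n E xs \<longleftrightarrow> xs \<noteq> [] \<and> (\<forall>x\<in>set xs. x < n)
     \<and> (\<forall>i. Suc i < length xs \<longrightarrow> E (xs ! i) (xs ! Suc i))"

definition connected_graph :: "nat \<Rightarrow> (nat \<Rightarrow> nat \<Rightarrow> bool) \<Rightarrow> bool" where
  "connected_graph n E \<longleftrightarrow>
     (\<forall>u v. u < n \<longrightarrow> v < n \<longrightarrow> (\<exists>xs. is_walk n E xs \<and> hd xs = u \<and> last xs = v))"

definition graph_dist :: "nat \<Rightarrow> (nat \<Rightarrow> nat \<Rightarrow> bool) \<Rightarrow> nat \<Rightarrow> nat \<Rightarrow> nat" where
  "graph_dist n E u v = (LEAST k. \<exists>xs. is_walk n E xs \<and> hd xs = u \<and> last xs = v
                                        \<and> length xs = Suc k)"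

definition diameter :: "nat \<Rightarrow> (nat \<Rightarrow> nat \<Rightarrow> bool) \<Rightarrow> nat" where
  "diameter n E = Max {graph_dist n E u v | u v. u < n \<and> v < n}"

definition bipartite :: "nat \<Rightarrow> (nat \<Rightarrow> nat \<Rightarrow> bool) \<Rightarrow> bool" where
  "bipartite n E \<longleftrightarrow> (\<exists>X. \<forall>u v. u < n \<longrightarrow> v < n \<longrightarrow> E u v \<longrightarrow> (u \<in> X \<longleftrightarrow> v \<notin> X))"

definition is_star :: "nat \<Rightarrow> (nat \<Rightarrow> nat \<Rightarrow> bool) \<Rightarrow> bool" where
  "is_star n E \<longleftrightarrow> (\<exists>c<n. \<forall>u v. u < n \<longrightarrow> v < n \<longrightarrow>
       (E u v \<longleftrightarrow> u \<noteq> v \<and> (u = c \<or> v = c)))"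

end

theory Submission
  imports Defs "Jordan_Normal_Form.Schur_Decomposition" "HOL-Analysis.Convex"
begin

text \<open>
  Let \<open>A\<close> be the adjacency matrix, \<open>D\<close> the diameter and \<open>r = root D (n - 1)\<close>.
  Every vertex reaches all others within \<open>D\<close> steps, so every row sum of \<open>A ^ D\<close> is at least
  \<open>n - 1\<close>, every row sum of \<open>A ^ (D * j)\<close> is at least \<open>(n - 1) ^ j\<close>, and by Cauchy-Schwarz
  \<open>trace (A ^ (2 * D * j)) \<ge> (n - 1) ^ (2 * j)\<close> for all \<open>j\<close>; this forces the spectral
  radius \<open>\<rho>\<close> to be at least \<open>r\<close>. Bipartiteness makes the spectrum symmetric, so the Estrada
  index is \<open>\<Sum>i. cosh \<lambda>\<^sub>i \<ge> 2 * cosh \<rho> + (n - 2) \<ge> 2 * cosh r + (n - 2)\<close>.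

  Equality holds iff the spectrum is \<open>{r, -r, 0, ..., 0}\<close>, i.e. iff \<open>trace (A\<^sup>2) = 2 * r\<^sup>2\<close>.
  Then the squared Frobenius norm of \<open>A ^ 3 - r\<^sup>2 * A\<close> is
  \<open>trace (A ^ 6) - 2 * r\<^sup>2 * trace (A ^ 4) + r ^ 4 * trace (A\<^sup>2) = 0\<close>, so all odd powers of \<open>A\<close>
  are multiples of \<open>A\<close>; since vertices on opposite sides are joined by odd walks, \<open>G\<close> is a
  complete bipartite graph \<open>K(a, b)\<close> with \<open>a * b = r\<^sup>2\<close>. If \<open>a, b \<ge> 2\<close> then \<open>D \<ge> 2\<close>
  and \<open>a * b = r\<^sup>2 \<le> r ^ D = a + b - 1\<close>, which is impossible. Conversely a star has
  \<open>trace (A\<^sup>2) = 2 * (n - 1)\<close> and \<open>D \<le> 2\<close>, so \<open>trace (A\<^sup>2) \<le> 2 * r\<^sup>2\<close>.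
\<close>

section \<open>Walk counts\<close>

definition adj :: "(nat \<Rightarrow> nat \<Rightarrow> bool) \<Rightarrow> nat \<Rightarrow> nat \<Rightarrow> real" where
  "adj E u v = (if E u v then 1 else 0)"

fun walks :: "nat \<Rightarrow> (nat \<Rightarrow> nat \<Rightarrow> bool) \<Rightarrow> nat \<Rightarrow> nat \<Rightarrow> nat \<Rightarrow> real" where
  "walks n E 0 u v = (if u = v then 1 else 0)"
| "walks n E (Suc k) u v = (\<Sum>w<n. walks n E k u w * adj E w v)"

definition walks_from :: "nat \<Rightarrow> (nat \<Rightarrow> nat \<Rightarrow> bool) \<Rightarrow> nat \<Rightarrow> nat \<Rightarrow> real" where
  "walks_from n E k u = (\<Sum>v<n. walks n E k u v)"

definition closed_walks :: "nat \<Rightarrow> (nat \<Rightarrow> nat \<Rightarrow> bool) \<Rightarrow> nat \<Rightarrow> real" where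
  "closed_walks n E k = (\<Sum>u<n. walks n E k u u)"

definition degree :: "nat \<Rightarrow> (nat \<Rightarrow> nat \<Rightarrow> bool) \<Rightarrow> nat \<Rightarrow> nat" where
  "degree n E u = card {v. v < n \<and> E u v}"

lemma walks_nonneg: "0 \<le> walks n E k u v"
  by (induction k arbitrary: v) (auto intro!: sum_nonneg simp: adj_def)

lemma walks_add: "v < n \<Longrightarrow> walks n E (i + j) u v = (\<Sum>w<n. walks n E i u w * walks n E j w v)"
proof (induction j arbitrary: v)
  case 0
  have "(\<Sum>w<n. walks n E i u w * walks n E 0 w v) = (\<Sum>w\<in>{v}. walks n E i u w * walks n E 0 w v)"
    by (rule sum.mono_neutral_right) (use 0 in auto)
  then show ?case by simp
next
  case (Suc j)
  have "walks n E (i + Suc j) u v = (\<Sum>x<n. walks n E (i + j) u x * adj E x v)" by simp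
  also have "\<dots> = (\<Sum>x<n. (\<Sum>w<n. walks n E i u w * walks n E j w x) * adj E x v)"
    using Suc.IH by (intro sum.cong) auto
  also have "\<dots> = (\<Sum>w<n. walks n E i u w * (\<Sum>x<n. walks n E j w x * adj E x v))"
    by (simp add: sum_distrib_left sum_distrib_right mult.assoc) (rule sum.swap)
  finally show ?case by simp
qed

lemma walks_Suc_0: "u < n \<Longrightarrow> walks n E (Suc 0) u v = adj E u v"
proof -
  assume u: "u < n"
  have "walks n E (Suc 0) u v = (\<Sum>w\<in>{u}. (if u = w then 1 else 0) * adj E w v)"
    by (simp only: walks.simps, rule sum.mono_neutral_right) (use u in auto)
  then show ?thesis by simp
qed

lemma walks_Suc_left:
  "u < n \<Longrightarrow> v < n \<Longrightarrow> walks n E (Suc k) u v = (\<Sum>w<n. adj E u w * walks n E k w v)"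
  using walks_add[of v n E "Suc 0" k u] by (simp add: walks_Suc_0 del: walks.simps)

lemma sum_adj_mult: "(\<Sum>w<n. adj E u w * f w) = (\<Sum>w | w < n \<and> E u w. f w)"
proof -
  have "(\<Sum>w<n. adj E u w * f w) = (\<Sum>w<n. if E u w then f w else 0)"
    by (intro sum.cong) (auto simp: adj_def)
  also have "\<dots> = (\<Sum>w \<in> {w \<in> {..<n}. E u w}. f w)"
    by (rule sum.inter_filter[symmetric]) simp
  also have "{w \<in> {..<n}. E u w} = {w. w < n \<and> E u w}"
    by auto
  finally show ?thesis .
qed

lemma walks_from_add:
  "walks_from n E (i + j) u = (\<Sum>w<n. walks n E i u w * walks_from n E j w)"
  unfolding walks_from_def by (simp add: walks_add sum_distrib_left) (rule sum.swap)

lemma walks_from_Suc: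
  "u < n \<Longrightarrow> walks_from n E (Suc k) u = (\<Sum>w | w < n \<and> E u w. walks_from n E k w)"
  using walks_from_add[of n E "Suc 0" k u] by (simp add: walks_Suc_0 sum_adj_mult del: walks.simps)

lemma walks_from_0: "u < n \<Longrightarrow> walks_from n E 0 u = 1"
  by (simp add: walks_from_def)

lemma walks_from_Suc_0: "u < n \<Longrightarrow> walks_from n E (Suc 0) u = real (degree n E u)"
  by (simp add: walks_from_Suc[of u n E 0] walks_from_0 degree_def)

lemma walks_from_add_ge:
  assumes "\<And>w. w < n \<Longrightarrow> c \<le> walks_from n E j w"
  shows "c * walks_from n E i u \<le> walks_from n E (i + j) u"
proof -
  have "c * walks_from n E i u = (\<Sum>w<n. walks n E i u w * c)"
    by (simp add: walks_from_def sum_distrib_left mult.commute)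
  also have "\<dots> \<le> (\<Sum>w<n. walks n E i u w * walks_from n E j w)"
    using assms by (intro sum_mono mult_left_mono walks_nonneg) auto
  finally show ?thesis by (simp add: walks_from_add)
qed

lemma is_walk_singleton: "is_walk n E [u] \<longleftrightarrow> u < n"
  by (simp add: is_walk_def)

lemma is_walk_Cons:
  assumes "ys \<noteq> []"
  shows "is_walk n E (u # ys) \<longleftrightarrow> u < n \<and> E u (hd ys) \<and> is_walk n E ys"
proof -
  have "(\<forall>i. Suc i < length (u # ys) \<longrightarrow> E ((u # ys) ! i) ((u # ys) ! Suc i)) \<longleftrightarrow>
        E u (hd ys) \<and> (\<forall>i. Suc i < length ys \<longrightarrow> E (ys ! i) (ys ! Suc i))"
    (is "?L \<longleftrightarrow> ?R")
  proof
    assume L: ?L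
    have "E u (hd ys)" using L[rule_format, of 0] assms by (simp add: hd_conv_nth)
    moreover have "E (ys ! i) (ys ! Suc i)" if "Suc i < length ys" for i
      using L[rule_format, of "Suc i"] that by simp
    ultimately show ?R by blast
  next
    assume R: ?R
    show ?L
    proof (intro allI impI)
      fix i assume "Suc i < length (u # ys)"
      then show "E ((u # ys) ! i) ((u # ys) ! Suc i)"
        using R assms by (cases i) (auto simp: hd_conv_nth)
    qed
  qed
  with assms show ?thesis by (auto simp: is_walk_def)
qed

lemma walks_ge_1_if_walk:
  "is_walk n E xs \<Longrightarrow> 1 \<le> walks n E (length xs - 1) (hd xs) (last xs)"
proof (induction xs)
  case Nil
  then show ?case by (simp add: is_walk_def)
next
  case (Cons u ys)
  show ?case
  proof (cases "ys = []")
    case False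
    have walk: "u < n" "E u (hd ys)" "is_walk n E ys"
      using Cons.prems is_walk_Cons[OF False] by auto
    have lt: "hd ys < n" "last ys < n"
      using walk(3) False by (auto simp: is_walk_def)
    have "1 \<le> adj E u (hd ys) * walks n E (length ys - 1) (hd ys) (last ys)"
      using Cons.IH walk by (simp add: adj_def)
    also have "\<dots> \<le> (\<Sum>w<n. adj E u w * walks n E (length ys - 1) w (last ys))"
      using lt by (intro member_le_sum mult_nonneg_nonneg walks_nonneg) (auto simp: adj_def)
    also have "\<dots> = walks n E (Suc (length ys - 1)) u (last ys)"
      using walks_Suc_left walk(1) lt by simp
    finally show ?thesis using False by simp
  qed simp
qed

definition bipartition :: "nat \<Rightarrow> (nat \<Rightarrow> nat \<Rightarrow> bool) \<Rightarrow> nat set \<Rightarrow> bool" where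
  "bipartition n E X \<longleftrightarrow> (\<forall>u v. u < n \<longrightarrow> v < n \<longrightarrow> E u v \<longrightarrow> (u \<in> X \<longleftrightarrow> v \<notin> X))"

lemma bipartite_iff_bipartition: "bipartite n E \<longleftrightarrow> (\<exists>X. bipartition n E X)"
  by (simp add: bipartite_def bipartition_def)

lemma walks_nonzero_parity:
  assumes "bipartition n E X" and "u < n" "v < n" "walks n E k u v \<noteq> 0"
  shows "(u \<in> X \<longleftrightarrow> v \<in> X) \<longleftrightarrow> even k"
  using assms(3,4)
proof (induction k arbitrary: v)
  case (Suc k)
  then have "(\<Sum>w<n. walks n E k u w * adj E w v) \<noteq> 0" by simp
  then obtain w where "w < n" "walks n E k u w * adj E w v \<noteq> 0"
    by (meson lessThan_iff sum.not_neutral_contains_not_neutral)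
  then have w: "w < n" "walks n E k u w \<noteq> 0" "E w v" by (auto simp: adj_def split: if_splits)
  then have "(u \<in> X \<longleftrightarrow> w \<in> X) \<longleftrightarrow> even k" using Suc.IH by blast
  moreover have "w \<in> X \<longleftrightarrow> v \<notin> X" using assms(1) w Suc.prems(1) by (auto simp: bipartition_def)
  ultimately show ?case by auto
qed (simp split: if_splits)

lemma closed_walks_odd: "bipartition n E X \<Longrightarrow> odd k \<Longrightarrow> closed_walks n E k = 0"
  unfolding closed_walks_def using walks_nonzero_parity[of n E X] by (intro sum.neutral) auto

section \<open>Reachability and diameter\<close>

fun reach :: "nat \<Rightarrow> (nat \<Rightarrow> nat \<Rightarrow> bool) \<Rightarrow> nat \<Rightarrow> nat \<Rightarrow> nat set" where
  "reach n E 0 u = {u}"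
| "reach n E (Suc k) u = insert u (\<Union>w \<in> {w. w < n \<and> E u w}. reach n E k w)"

lemma self_in_reach: "u \<in> reach n E k u"
  by (cases k) auto

lemma finite_reach: "finite (reach n E k u)"
  by (induction k arbitrary: u) auto

lemma reach_subset: "u < n \<Longrightarrow> reach n E k u \<subseteq> {..<n}"
  by (induction k arbitrary: u) auto

lemma reach_mono: "k \<le> m \<Longrightarrow> reach n E k u \<subseteq> reach n E m u"
proof (induction m rule: dec_induct)
  case (step m)
  have "reach n E m u \<subseteq> reach n E (Suc m) u" for u
    by (induction m arbitrary: u) (auto simp: self_in_reach)
  with step.IH show ?case by blast
qed simp

lemma last_in_reach_if_walk: "is_walk n E xs \<Longrightarrow> last xs \<in> reach n E (length xs - 1) (hd xs)"
proof (induction xs)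
  case (Cons u ys)
  show ?case
  proof (cases "ys = []")
    case False
    have walk: "u < n" "E u (hd ys)" "is_walk n E ys"
      using Cons.prems is_walk_Cons[OF False] by auto
    have "hd ys < n" using walk(3) False by (auto simp: is_walk_def)
    moreover have "last ys \<in> reach n E (length ys - 1) (hd ys)" using Cons.IH walk(3) .
    ultimately have "last ys \<in> reach n E (Suc (length ys - 1)) u" using walk(2) by auto
    then show ?thesis using False by simp
  qed simp
qed (simp add: is_walk_def)

lemma shortest_walk:
  assumes "connected_graph n E" and "u < n" "v < n"
  obtains xs where "is_walk n E xs" "hd xs = u" "last xs = v" "length xs = Suc (graph_dist n E u v)"
proof -
  obtain xs where "is_walk n E xs" "hd xs = u" "last xs = v"
    using assms unfolding connected_graph_def by blast
  then have "\<exists>k xs. is_walk n E xs \<and> hd xs = u \<and> last xs = v \<and> length xs = Suc k"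
    by (intro exI[of _ "length xs - 1"] exI[of _ xs]) (auto simp: is_walk_def)
  then have "\<exists>xs. is_walk n E xs \<and> hd xs = u \<and> last xs = v \<and> length xs = Suc (graph_dist n E u v)"
    unfolding graph_dist_def by (rule LeastI_ex)
  then show ?thesis using that by blast
qed

lemma graph_dist_le_if_walk:
  "is_walk n E xs \<Longrightarrow> graph_dist n E (hd xs) (last xs) \<le> length xs - 1"
  unfolding graph_dist_def by (rule Least_le, rule exI[of _ xs]) (auto simp: is_walk_def)

lemma finite_graph_dists: "finite {graph_dist n E u v | u v. u < n \<and> v < n}"
proof -
  have "{graph_dist n E u v | u v. u < n \<and> v < n} = (\<lambda>(u, v). graph_dist n E u v) ` ({..<n} \<times> {..<n})"
    by auto
  then show ?thesis by simp
qed

lemma graph_dist_le_diameter: "u < n \<Longrightarrow> v < n \<Longrightarrow> graph_dist n E u v \<le> diameter n E"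
  unfolding diameter_def by (rule Max_ge[OF finite_graph_dists]) blast

lemma diameter_le:
  assumes "0 < n" and "\<And>u v. u < n \<Longrightarrow> v < n \<Longrightarrow> graph_dist n E u v \<le> d"
  shows "diameter n E \<le> d"
  unfolding diameter_def using assms by (subst Max_le_iff[OF finite_graph_dists]) auto

lemma reach_diameter:
  assumes "connected_graph n E" and "u < n"
  shows "reach n E (diameter n E) u = {..<n}"
proof
  show "{..<n} \<subseteq> reach n E (diameter n E) u"
  proof
    fix v assume "v \<in> {..<n}"
    then obtain xs where xs: "is_walk n E xs" "hd xs = u" "last xs = v"
      "length xs = Suc (graph_dist n E u v)"
      using shortest_walk[OF assms(1,2)] by auto
    then have "v \<in> reach n E (graph_dist n E u v) u"
      using last_in_reach_if_walk[OF xs(1)] by simp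
    moreover have "graph_dist n E u v \<le> diameter n E"
      using graph_dist_le_diameter assms(2) \<open>v \<in> {..<n}\<close> by simp
    ultimately show "v \<in> reach n E (diameter n E) u"
      using reach_mono by blast
  qed
qed (rule reach_subset[OF assms(2)])

lemma edge_if_diameter_le_1:
  assumes "connected_graph n E" "diameter n E \<le> 1" and "u < n" "v < n" "u \<noteq> v"
  shows "E u v"
proof -
  have "v \<in> reach n E (Suc 0) u"
    using reach_diameter[OF assms(1,3)] reach_mono[OF assms(2), of n E u] assms(4) by auto
  then show ?thesis using assms(5) by auto
qed

lemma diameter_pos:
  assumes "connected_graph n E" and "2 \<le> n"
  shows "1 \<le> diameter n E"
proof (rule ccontr)
  assume "\<not> 1 \<le> diameter n E"
  then have "diameter n E = 0" by simp
  then have "reach n E (diameter n E) 0 = {0}" by simp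
  moreover have "1 \<in> reach n E (diameter n E) 0"
    using reach_diameter[OF assms(1), of 0] assms(2) by simp
  ultimately show False by simp
qed

context
  fixes n :: nat and E :: "nat \<Rightarrow> nat \<Rightarrow> bool"
  assumes simple: "simple_graph n E"
begin

lemma edge_sym: "E u v \<Longrightarrow> E v u"
  using simple by (simp add: simple_graph_def)

lemma edge_irrefl: "\<not> E u u"
  using simple by (simp add: simple_graph_def)

lemma edge_less: "E u v \<Longrightarrow> v < n"
  using simple by (simp add: simple_graph_def)

lemma walks_sym: "u < n \<Longrightarrow> v < n \<Longrightarrow> walks n E k u v = walks n E k v u"
proof (induction k arbitrary: u v)
  case (Suc k)
  have "walks n E (Suc k) u v = (\<Sum>w<n. adj E v w * walks n E k w u)"
    using Suc by (auto simp: adj_def edge_sym mult.commute intro: sum.cong)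
  also have "\<dots> = walks n E (Suc k) v u" using walks_Suc_left Suc.prems by simp
  finally show ?case .
qed simp

lemma closed_walks_add:
  "closed_walks n E (i + j) = (\<Sum>u<n. \<Sum>v<n. walks n E i u v * walks n E j u v)"
  unfolding closed_walks_def by (intro sum.cong refl) (simp add: walks_add walks_sym)

lemma closed_walks_2: "closed_walks n E 2 = (\<Sum>u<n. real (degree n E u))"
proof -
  have "closed_walks n E 2 = (\<Sum>u<n. \<Sum>v<n. walks n E (Suc 0) u v * walks n E (Suc 0) u v)"
    using closed_walks_add[of "Suc 0" "Suc 0"] by (simp add: numeral_2_eq_2)
  also have "\<dots> = (\<Sum>u<n. \<Sum>v<n. adj E u v * 1)"
    by (intro sum.cong refl) (simp add: walks_Suc_0 adj_def del: walks.simps)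
  finally show ?thesis by (simp only: sum_adj_mult) (simp add: degree_def)
qed

lemma card_reach_le_walks_from:
  assumes "1 \<le> k" and "u < n"
  shows "real (card (reach n E k u)) \<le> 1 + walks_from n E k u"
  using assms
proof (induction k arbitrary: u rule: dec_induct)
  case base
  have "u \<notin> {w. w < n \<and> E u w}" using edge_irrefl by auto
  then show ?case using base by (simp add: walks_from_Suc_0 degree_def)
next
  case (step k)
  let ?N = "{w. w < n \<and> E u w}"
  have u_in: "u \<in> reach n E k w" if "w \<in> ?N" for w
    using that reach_mono[OF step.hyps(1), of n E w] edge_sym[of u w] edge_less[of w u] by auto
  then have reach_eq: "reach n E (Suc k) u = insert u (\<Union>w\<in>?N. reach n E k w - {u})"
    by auto
  have "card (reach n E (Suc k) u) \<le> card {u} + card (\<Union>w\<in>?N. reach n E k w - {u})"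
    using card_Un_le[of "{u}" "\<Union>w\<in>?N. reach n E k w - {u}"]
    unfolding reach_eq by (simp only: insert_is_Un[symmetric])
  moreover have "card (\<Union>w\<in>?N. reach n E k w - {u}) \<le> (\<Sum>w\<in>?N. card (reach n E k w - {u}))"
    by (rule card_UN_le) simp
  ultimately have "real (card (reach n E (Suc k) u)) \<le> 1 + (\<Sum>w\<in>?N. real (card (reach n E k w - {u})))"
    by (simp flip: of_nat_sum)
  also have "(\<Sum>w\<in>?N. real (card (reach n E k w - {u}))) \<le> (\<Sum>w\<in>?N. walks_from n E k w)"
  proof (intro sum_mono)
    fix w assume w: "w \<in> ?N"
    have "card (reach n E k w) \<ge> 1"
      using finite_reach self_in_reach by (metis One_nat_def Suc_leI card_gt_0_iff empty_iff)
    then have "real (card (reach n E k w - {u})) = real (card (reach n E k w)) - 1"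
      using u_in[OF w] by (simp add: finite_reach of_nat_diff)
    then show "real (card (reach n E k w - {u})) \<le> walks_from n E k w"
      using step.IH[of w] w by simp
  qed
  finally show ?case using walks_from_Suc step.prems by simp
qed

lemma walks_from_diameter:
  assumes "connected_graph n E" "2 \<le> n" and "u < n"
  shows "real n - 1 \<le> walks_from n E (diameter n E) u"
  using card_reach_le_walks_from[OF diameter_pos[OF assms(1,2)] assms(3)]
    reach_diameter[OF assms(1,3)] by simp

lemma walks_from_diameter_mult:
  assumes "connected_graph n E" "2 \<le> n" and "u < n"
  shows "(real n - 1) ^ j \<le> walks_from n E (diameter n E * j) u"
proof (induction j)
  case 0
  then show ?case using walks_from_0[OF assms(3)] by simp
next
  case (Suc j)
  have "(real n - 1) ^ Suc j \<le> (real n - 1) * walks_from n E (diameter n E * j) u"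
    using Suc.IH assms(2) by (simp add: mult_left_mono)
  also have "\<dots> \<le> walks_from n E (diameter n E * j + diameter n E) u"
    by (rule walks_from_add_ge) (rule walks_from_diameter[OF assms(1,2)])
  finally show ?case by (simp add: add.commute)
qed

lemma sum_walks_from_squared_le_closed_walks:
  "(\<Sum>u<n. (walks_from n E L u)\<^sup>2) \<le> real n * closed_walks n E (2 * L)"
proof -
  have "(\<Sum>u<n. (walks_from n E L u)\<^sup>2) \<le> (\<Sum>u<n. (\<Sum>v<n. (walks n E L u v)\<^sup>2) * real n)"
    unfolding walks_from_def
    using sum_squared_le_sum_of_squares[of "walks n E L _" "{..<n}"] by (intro sum_mono) simp
  also have "\<dots> = real n * closed_walks n E (L + L)"
    by (simp add: closed_walks_add power2_eq_square sum_distrib_left sum_distrib_right mult.commute)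
  finally show ?thesis by (simp add: mult_2)
qed

lemma closed_walks_diameter:
  assumes "connected_graph n E" "2 \<le> n"
  shows "(real n - 1) ^ (2 * j) \<le> closed_walks n E (2 * (diameter n E * j))"
proof -
  have "real n * (real n - 1) ^ (2 * j) = (\<Sum>u<n. ((real n - 1) ^ j)\<^sup>2)"
    by (simp add: power_mult mult.commute)
  also have "\<dots> \<le> (\<Sum>u<n. (walks_from n E (diameter n E * j) u)\<^sup>2)"
    using walks_from_diameter_mult[OF assms] assms(2) by (intro sum_mono power_mono) auto
  also have "\<dots> \<le> real n * closed_walks n E (2 * (diameter n E * j))"
    by (rule sum_walks_from_squared_le_closed_walks)
  finally show ?thesis using assms(2) by simp
qed

end

section \<open>Traces and eigenvalues\<close>

definition trace :: "'a :: comm_semiring_1 mat \<Rightarrow> 'a" where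
  "trace A = (\<Sum>i<dim_row A. A $$ (i, i))"

lemma index_mult_mat_sum:
  fixes A B :: "'a :: comm_semiring_1 mat"
  assumes "A \<in> carrier_mat nr n" "B \<in> carrier_mat n nc" "i < nr" "j < nc"
  shows "(A * B) $$ (i, j) = (\<Sum>l<n. A $$ (i, l) * B $$ (l, j))"
  using assms by (auto simp: scalar_prod_def lessThan_atLeast0 intro!: sum.cong)

lemma index_mult_mat_vec_sum:
  fixes A :: "'a :: comm_semiring_1 mat"
  assumes "A \<in> carrier_mat n n" "v \<in> carrier_vec n" "i < n"
  shows "(A *\<^sub>v v) $ i = (\<Sum>j<n. A $$ (i, j) * v $ j)"
  using assms by (auto simp: scalar_prod_def lessThan_atLeast0 intro!: sum.cong)

lemma trace_mult_comm:
  fixes A B :: "'a :: comm_semiring_1 mat"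
  assumes "A \<in> carrier_mat n n" "B \<in> carrier_mat n n"
  shows "trace (A * B) = trace (B * A)"
proof -
  have "trace (A * B) = (\<Sum>i<n. \<Sum>l<n. A $$ (i, l) * B $$ (l, i))"
    unfolding trace_def using assms by (intro sum.cong refl index_mult_mat_sum) auto
  also have "\<dots> = (\<Sum>l<n. \<Sum>i<n. B $$ (l, i) * A $$ (i, l))"
    by (subst sum.swap) (simp add: mult.commute)
  also have "\<dots> = trace (B * A)"
    unfolding trace_def using assms by (intro sum.cong refl index_mult_mat_sum[symmetric]) auto
  finally show ?thesis .
qed

lemma trace_similar: "similar_mat_wit A B P Q \<Longrightarrow> trace A = trace B"
proof -
  assume sim: "similar_mat_wit A B P Q"
  define n where "n = dim_row A"
  note wit = similar_mat_witD[OF n_def sim]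
  have "trace A = trace (Q * (P * B))"
    unfolding wit(3) using wit(5-7) by (intro trace_mult_comm) auto
  also have "Q * (P * B) = B"
    using wit(2,5-7) by (simp flip: assoc_mult_mat[of Q n n P n B n])
  finally show ?thesis .
qed

lemma upper_triangular_mult:
  fixes A B :: "'a :: comm_semiring_1 mat"
  assumes A: "A \<in> carrier_mat n n" "upper_triangular A"
    and B: "B \<in> carrier_mat n n" "upper_triangular B"
  shows "upper_triangular (A * B)"
    and "i < n \<Longrightarrow> (A * B) $$ (i, i) = A $$ (i, i) * B $$ (i, i)"
proof -
  have zero: "A $$ (i, l) * B $$ (l, j) = 0" if "j \<le> i" "i < n" "l < n" "l \<noteq> i \<or> j < i" for i j l
    using A B that by (cases "l < i") (auto simp: upper_triangular_def)
  have "(A * B) $$ (i, j) = 0" if "j < i" "i < n" for i j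
    using that zero by (simp add: index_mult_mat_sum[OF A(1) B(1)])
  then show "upper_triangular (A * B)"
    using A by (auto simp: upper_triangular_def)
  assume i: "i < n"
  have "(A * B) $$ (i, i) = (\<Sum>l\<in>{i}. A $$ (i, l) * B $$ (l, i))"
    unfolding index_mult_mat_sum[OF A(1) B(1) i i]
    by (rule sum.mono_neutral_right) (use i zero in auto)
  then show "(A * B) $$ (i, i) = A $$ (i, i) * B $$ (i, i)" by simp
qed

lemma upper_triangular_pow:
  fixes T :: "'a :: comm_semiring_1 mat"
  assumes T: "T \<in> carrier_mat n n" "upper_triangular T"
  shows "upper_triangular (T ^\<^sub>m k) \<and> (\<forall>i<n. (T ^\<^sub>m k) $$ (i, i) = T $$ (i, i) ^ k)"
proof (induction k)
  case 0
  then show ?case using T by auto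
next
  case (Suc k)
  then show ?case
    using upper_triangular_mult[OF pow_carrier_mat[OF T(1)] _ T] by (simp add: mult.commute)
qed

lemma trace_pow_eq_sum_roots:
  fixes A :: "complex mat"
  assumes A: "A \<in> carrier_mat n n" and char: "char_poly A = (\<Prod>a\<leftarrow>es. [:- a, 1:])"
  shows "trace (A ^\<^sub>m k) = (\<Sum>e\<leftarrow>es. e ^ k)"
proof -
  obtain T P Q where "schur_decomposition A es = (T, P, Q)"
    by (cases "schur_decomposition A es") auto
  from schur_decomposition[OF A char this]
  have sim: "similar_mat_wit A T P Q" and ut: "upper_triangular T" and diag: "diag_mat T = es"
    by auto
  have T: "T \<in> carrier_mat n n" using similar_mat_witD2[OF A sim] by auto
  have "trace (A ^\<^sub>m k) = trace (T ^\<^sub>m k)"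
    by (rule trace_similar[OF similar_mat_wit_pow[OF sim]])
  also have "\<dots> = (\<Sum>i<n. T $$ (i, i) ^ k)"
    unfolding trace_def using upper_triangular_pow[OF T ut, of k] T by simp
  also have "\<dots> = (\<Sum>e\<leftarrow>es. e ^ k)"
    using T unfolding diag[symmetric] diag_mat_def
    by (simp add: sum_set_upt_conv_sum_list_nat[symmetric] atLeast0LessThan)
  finally show ?thesis .
qed

lemma eigenvalue_real_if_symmetric:
  fixes A :: "real mat"
  assumes A: "A \<in> carrier_mat n n" and sym: "\<And>i j. i < n \<Longrightarrow> j < n \<Longrightarrow> A $$ (i, j) = A $$ (j, i)"
    and "eigenvalue (map_mat complex_of_real A) e"
  shows "Im e = 0"
proof -
  let ?M = "map_mat complex_of_real A"
  obtain v where v: "v \<in> carrier_vec n" "v \<noteq> 0\<^sub>v n" "?M *\<^sub>v v = e \<cdot>\<^sub>v v"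
    using assms(3) A unfolding eigenvalue_def eigenvector_def by auto
  \<comment> \<open>the Rayleigh quotient \<open>q / S\<close> of \<open>v\<close> equals \<open>e\<close>, and \<open>q\<close> is real since \<open>A\<close> is real symmetric\<close>
  have Mv: "(?M *\<^sub>v v) $ i = (\<Sum>j<n. complex_of_real (A $$ (i, j)) * v $ j)" if "i < n" for i
    using index_mult_mat_vec_sum[of ?M n v i] A v(1) that by simp
  define q where "q = (\<Sum>i<n. \<Sum>j<n. cnj (v $ i) * complex_of_real (A $$ (i, j)) * v $ j)"
  define S where "S = (\<Sum>i<n. (cmod (v $ i))\<^sup>2)"
  have "q = (\<Sum>i<n. cnj (v $ i) * (?M *\<^sub>v v) $ i)"
    unfolding q_def by (simp add: Mv sum_distrib_left mult.assoc)
  also have "\<dots> = e * complex_of_real S"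
    unfolding S_def using v by (simp add: sum_distrib_left complex_norm_square[symmetric] algebra_simps)
  finally have qS: "q = e * complex_of_real S" .
  have "cnj q = (\<Sum>i<n. \<Sum>j<n. v $ i * complex_of_real (A $$ (i, j)) * cnj (v $ j))"
    unfolding q_def by simp
  also have "\<dots> = (\<Sum>j<n. \<Sum>i<n. v $ i * complex_of_real (A $$ (i, j)) * cnj (v $ j))"
    by (rule sum.swap)
  also have "\<dots> = q"
    unfolding q_def by (intro sum.cong refl) (simp add: sym mult.commute mult.left_commute)
  finally have "Im (cnj q) = Im q" by simp
  then have "Im q = 0" by simp
  obtain i where i: "i < n" "v $ i \<noteq> 0"
    using v(1,2) by (metis carrier_vecD eq_vecI index_zero_vec(1,2))
  have "0 < S"
    unfolding S_def using i by (intro sum_pos2[of _ i]) auto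
  then show ?thesis using qS \<open>Im q = 0\<close> by simp
qed

lemma eigenvalue_uminus_if_bipartite:
  fixes A :: "'a :: comm_ring_1 mat"
  assumes A: "A \<in> carrier_mat n n"
    and cross: "\<And>i j. i < n \<Longrightarrow> j < n \<Longrightarrow> A $$ (i, j) \<noteq> 0 \<Longrightarrow> i \<in> X \<longleftrightarrow> j \<notin> X"
    and "eigenvalue A e"
  shows "eigenvalue A (- e)"
proof -
  obtain v where v: "v \<in> carrier_vec n" "v \<noteq> 0\<^sub>v n" "A *\<^sub>v v = e \<cdot>\<^sub>v v"
    using assms(3) A unfolding eigenvalue_def eigenvector_def by auto
  define s where "s i = (if i \<in> X then 1 else - 1 :: 'a)" for i
  define w where "w = vec n (\<lambda>i. s i * v $ i)"
  have w: "w \<in> carrier_vec n" unfolding w_def by simp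
  have ss: "s i * s i = 1" for i by (simp add: s_def)
  have "w \<noteq> 0\<^sub>v n"
  proof
    assume w0: "w = 0\<^sub>v n"
    have "v $ i = 0" if "i < n" for i
    proof -
      have "s i * v $ i = 0" using arg_cong[OF w0, of "\<lambda>x. x $ i"] that by (simp add: w_def)
      then have "s i * s i * v $ i = 0" by (simp add: mult.assoc)
      then show ?thesis by (simp add: ss)
    qed
    then have "v = 0\<^sub>v n" using v(1) by (intro eq_vecI) auto
    then show False using v(2) by simp
  qed
  have "A *\<^sub>v w = (- e) \<cdot>\<^sub>v w"
  proof (rule eq_vecI)
    fix i assume "i < dim_vec ((- e) \<cdot>\<^sub>v w)"
    then have i: "i < n" using w by simp
    have flip: "A $$ (i, j) * s j = - s i * A $$ (i, j)" if "j < n" for j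
      using cross[OF i that] by (cases "A $$ (i, j) = 0") (auto simp: s_def)
    have "(A *\<^sub>v w) $ i = (\<Sum>j<n. A $$ (i, j) * (s j * v $ j))"
      using index_mult_mat_vec_sum[OF A w i] by (simp add: w_def)
    also have "\<dots> = - s i * (\<Sum>j<n. A $$ (i, j) * v $ j)"
      by (simp add: sum_distrib_left flip mult.assoc[symmetric])
    also have "(\<Sum>j<n. A $$ (i, j) * v $ j) = e * v $ i"
      using index_mult_mat_vec_sum[OF A v(1) i] v(3) i v(1) by simp
    finally show "(A *\<^sub>v w) $ i = ((- e) \<cdot>\<^sub>v w) $ i"
      using i w by (simp add: w_def algebra_simps)
  qed (use A w in simp)
  then show ?thesis
    using w \<open>w \<noteq> 0\<^sub>v n\<close> A unfolding eigenvalue_def eigenvector_def by auto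
qed

lemma adj_mat_carrier: "adj_mat n E \<in> carrier_mat n n"
  by (simp add: adj_mat_def)

lemma dim_adj_mat [simp]: "dim_row (adj_mat n E) = n" "dim_col (adj_mat n E) = n"
  by (simp_all add: adj_mat_def)

lemma adj_mat_index: "i < n \<Longrightarrow> j < n \<Longrightarrow> adj_mat n E $$ (i, j) = adj E i j"
  by (simp add: adj_mat_def adj_def)

lemma adj_mat_pow_index:
  "i < n \<Longrightarrow> j < n \<Longrightarrow> (adj_mat n E ^\<^sub>m k) $$ (i, j) = walks n E k i j"
proof (induction k arbitrary: j)
  case (Suc k)
  have "(adj_mat n E ^\<^sub>m Suc k) $$ (i, j) = (\<Sum>l<n. (adj_mat n E ^\<^sub>m k) $$ (i, l) * adj_mat n E $$ (l, j))"
    unfolding pow_mat.simps(2)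
    by (rule index_mult_mat_sum[OF pow_carrier_mat[OF adj_mat_carrier] adj_mat_carrier]) (use Suc.prems in auto)
  then show ?case using Suc by (simp add: adj_mat_index)
qed (simp add: adj_mat_def)

lemma adj_eigenvalues:
  "length (adj_eigenvalues n E) = n"
  "char_poly (map_mat complex_of_real (adj_mat n E)) = (\<Prod>a\<leftarrow>adj_eigenvalues n E. [:- a, 1:])"
proof -
  have "\<exists>es. length es = n \<and> char_poly (map_mat complex_of_real (adj_mat n E)) = (\<Prod>a\<leftarrow>es. [:- a, 1:])"
    using char_poly_factorized[of "map_mat complex_of_real (adj_mat n E)" n] adj_mat_carrier by auto
  then have "length (adj_eigenvalues n E) = n \<and>
      char_poly (map_mat complex_of_real (adj_mat n E)) = (\<Prod>a\<leftarrow>adj_eigenvalues n E. [:- a, 1:])"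
    unfolding adj_eigenvalues_def by (rule someI_ex)
  then show "length (adj_eigenvalues n E) = n"
    "char_poly (map_mat complex_of_real (adj_mat n E)) = (\<Prod>a\<leftarrow>adj_eigenvalues n E. [:- a, 1:])"
    by auto
qed

lemma adj_eigenvalues_power_sum:
  "(\<Sum>e\<leftarrow>adj_eigenvalues n E. e ^ k) = complex_of_real (closed_walks n E k)"
proof -
  let ?A = "adj_mat n E"
  have "(\<Sum>e\<leftarrow>adj_eigenvalues n E. e ^ k) = trace (map_mat complex_of_real ?A ^\<^sub>m k)"
    by (rule trace_pow_eq_sum_roots[symmetric]) (use adj_mat_carrier adj_eigenvalues(2) in auto)
  also have "map_mat complex_of_real ?A ^\<^sub>m k = map_mat complex_of_real (?A ^\<^sub>m k)"
    by (rule of_real_hom.mat_hom_pow[OF adj_mat_carrier, symmetric])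
  finally show ?thesis
    by (simp add: trace_def closed_walks_def adj_mat_pow_index)
qed

lemma eigenvalue_iff_mem_adj_eigenvalues:
  "eigenvalue (map_mat complex_of_real (adj_mat n E)) e \<longleftrightarrow> e \<in> set (adj_eigenvalues n E)"
proof -
  have "eigenvalue (map_mat complex_of_real (adj_mat n E)) e \<longleftrightarrow>
      poly (\<Prod>a\<leftarrow>adj_eigenvalues n E. [:- a, 1:]) e = 0"
    using eigenvalue_root_char_poly[of "map_mat complex_of_real (adj_mat n E)" n] adj_eigenvalues(2)
    by (simp add: adj_mat_carrier)
  then show ?thesis by (simp add: poly_prod_list_zero_iff)
qed

lemma adj_eigenvalue_real:
  "simple_graph n E \<Longrightarrow> e \<in> set (adj_eigenvalues n E) \<Longrightarrow> Im e = 0"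
  using eigenvalue_real_if_symmetric[OF adj_mat_carrier]
  by (metis adj_def adj_mat_index edge_sym eigenvalue_iff_mem_adj_eigenvalues)

lemma adj_eigenvalue_uminus:
  assumes "bipartition n E X" and "e \<in> set (adj_eigenvalues n E)"
  shows "- e \<in> set (adj_eigenvalues n E)"
proof -
  have car: "map_mat complex_of_real (adj_mat n E) \<in> carrier_mat n n"
    by (simp add: adj_mat_carrier)
  have cross: "i \<in> X \<longleftrightarrow> j \<notin> X"
    if "i < n" "j < n" "map_mat complex_of_real (adj_mat n E) $$ (i, j) \<noteq> 0" for i j
    using that assms(1) by (auto simp: adj_mat_index adj_def bipartition_def split: if_splits)
  have "eigenvalue (map_mat complex_of_real (adj_mat n E)) e"
    using assms(2) by (simp add: eigenvalue_iff_mem_adj_eigenvalues)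
  then have "eigenvalue (map_mat complex_of_real (adj_mat n E)) (- e)"
    using eigenvalue_uminus_if_bipartite[OF car cross] by blast
  then show ?thesis by (simp add: eigenvalue_iff_mem_adj_eigenvalues)
qed

lemma real_adjacency_spectrum:
  assumes "simple_graph n E" "bipartition n E X"
  obtains a :: "nat \<Rightarrow> real" where
    "\<And>k. (\<Sum>i<n. a i ^ k) = closed_walks n E k"
    "estrada_index n E = (\<Sum>i<n. exp (a i))"
    "\<And>i. i < n \<Longrightarrow> \<exists>j<n. a j = - a i"
proof -
  let ?es = "adj_eigenvalues n E"
  define a where "a i = Re (?es ! i)" for i
  have es: "?es ! i = complex_of_real (a i)" if "i < n" for i
    using adj_eigenvalue_real[OF assms(1)] that adj_eigenvalues(1)
    by (simp add: a_def complex_eq_iff)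
  have sum_list: "(\<Sum>e\<leftarrow>?es. f e) = (\<Sum>i<n. f (?es ! i))" for f :: "complex \<Rightarrow> complex"
    by (simp add: sum_list_sum_nth adj_eigenvalues(1) atLeast0LessThan)
  have "complex_of_real (\<Sum>i<n. a i ^ k) = complex_of_real (closed_walks n E k)" for k
    using adj_eigenvalues_power_sum[where n = n and E = E and k = k]
    by (simp add: sum_list es)
  then have "(\<Sum>i<n. a i ^ k) = closed_walks n E k" for k
    by (simp only: of_real_eq_iff)
  moreover have "estrada_index n E = (\<Sum>i<n. exp (a i))"
    unfolding estrada_index_def sum_list by (simp add: es exp_of_real flip: of_real_sum)
  moreover have "\<exists>j<n. a j = - a i" if "i < n" for i
  proof -
    have "- (?es ! i) \<in> set ?es"
      using adj_eigenvalue_uminus[OF assms(2)] that adj_eigenvalues(1) by simp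
    then obtain j where "j < n" "?es ! j = - (?es ! i)"
      by (auto simp: in_set_conv_nth adj_eigenvalues(1))
    then show ?thesis using that by (auto simp: a_def)
  qed
  ultimately show ?thesis using that by blast
qed

section \<open>Symmetric real spectra\<close>

lemma sum_exp_eq_sum_cosh:
  fixes a :: "'i \<Rightarrow> real"
  assumes odd_sums: "\<And>k. odd k \<Longrightarrow> (\<Sum>i\<in>I. a i ^ k) = 0"
  shows "(\<Sum>i\<in>I. exp (a i)) = (\<Sum>i\<in>I. cosh (a i))"
proof -
  have series: "(\<lambda>k. \<Sum>i\<in>I. b i ^ k /\<^sub>R fact k) sums (\<Sum>i\<in>I. exp (b i))" for b :: "'i \<Rightarrow> real"
    by (rule sums_sum) (rule exp_converges)
  have "(\<Sum>i\<in>I. (- a i) ^ k /\<^sub>R fact k) = (\<Sum>i\<in>I. a i ^ k /\<^sub>R fact k)" for k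
  proof (cases "even k")
    case False
    have "(\<Sum>i\<in>I. (- a i) ^ k /\<^sub>R fact k) = - (\<Sum>i\<in>I. a i ^ k) / fact k"
      using False by (simp add: sum_negf sum_divide_distrib divide_inverse mult.commute sum_distrib_left)
    moreover have "(\<Sum>i\<in>I. a i ^ k /\<^sub>R fact k) = (\<Sum>i\<in>I. a i ^ k) / fact k"
      by (simp add: sum_divide_distrib divide_inverse mult.commute sum_distrib_left)
    ultimately show ?thesis using odd_sums[OF False] by simp
  qed simp
  then have "(\<Sum>i\<in>I. exp (- a i)) = (\<Sum>i\<in>I. exp (a i))"
    using series[of "\<lambda>i. - a i"] series[of a] by (simp add: sums_unique2)
  then show ?thesis
    unfolding cosh_field_def by (simp add: sum_divide_distrib[symmetric] sum.distrib)
qed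

lemma power_Max_abs_ge_if_power_sums_ge:
  fixes a :: "'i \<Rightarrow> real"
  assumes I: "finite I" "I \<noteq> {}" and N: "0 < N"
    and power_sums: "\<And>j. N ^ (2 * j) \<le> (\<Sum>i\<in>I. a i ^ (2 * (D * j)))"
  shows "N \<le> Max ((\<lambda>i. \<bar>a i\<bar>) ` I) ^ D"
proof (rule ccontr)
  define \<rho> where "\<rho> = Max ((\<lambda>i. \<bar>a i\<bar>) ` I)"
  have le_\<rho>: "\<bar>a i\<bar> \<le> \<rho>" if "i \<in> I" for i
    unfolding \<rho>_def using I that by simp
  obtain i where "i \<in> I" using I by blast
  then have "0 \<le> \<rho>" using le_\<rho>[of i] by linarith
  assume "\<not> N \<le> \<rho> ^ D"
  define q where "q = (\<rho> ^ D / N)\<^sup>2"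
  have "q < 1"
    unfolding q_def using \<open>\<not> N \<le> \<rho> ^ D\<close> \<open>0 \<le> \<rho>\<close> N by (simp add: power_less_one_iff abs_less_iff)
  then obtain j where j: "q ^ j < 1 / real (card I)"
    using real_arch_pow_inv[of "1 / real (card I)" q] I by (auto simp: card_gt_0_iff)
  have "N ^ (2 * j) \<le> (\<Sum>i\<in>I. \<bar>a i\<bar> ^ (2 * (D * j)))"
    using power_sums[of j] by (simp add: power_even_abs)
  also have "\<dots> \<le> real (card I) * \<rho> ^ (2 * (D * j))"
    using sum_mono[of I "\<lambda>i. \<bar>a i\<bar> ^ (2 * (D * j))" "\<lambda>_. \<rho> ^ (2 * (D * j))"] le_\<rho>
    by (simp add: power_mono)
  also have "\<rho> ^ (2 * (D * j)) = q ^ j * N ^ (2 * j)"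
    unfolding q_def using N by (simp add: power_divide power_mult[symmetric] ac_simps)
  also have "real (card I) * (q ^ j * N ^ (2 * j)) < N ^ (2 * j)"
    using j N I by (simp add: field_simps card_gt_0_iff)
  finally show False by simp
qed

lemma sum_even_split_symmetric:
  fixes a :: "nat \<Rightarrow> real"
  assumes symmetric: "\<And>i. i < n \<Longrightarrow> \<exists>j<n. a j = - a i"
    and i0: "i0 < n" and nonzero: "a i0 \<noteq> 0"
  obtains R where "R \<subseteq> {..<n}" "card R = n - 2"
    "\<And>f :: real \<Rightarrow> real. (\<And>x. f (- x) = f x) \<Longrightarrow> (\<Sum>i<n. f (a i)) = 2 * f \<bar>a i0\<bar> + (\<Sum>i\<in>R. f (a i))"
proof -
  obtain j0 where j0: "j0 < n" "a j0 = - a i0" using symmetric[OF i0] by blast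
  then have "i0 \<noteq> j0" using nonzero by auto
  define R where "R = {..<n} - {i0, j0}"
  have sub: "R \<subseteq> {..<n}" and card: "card R = n - 2"
    unfolding R_def using i0 j0 \<open>i0 \<noteq> j0\<close> by (auto simp: card_Diff_subset)
  have split: "(\<Sum>i<n. f (a i)) = 2 * f \<bar>a i0\<bar> + (\<Sum>i\<in>R. f (a i))"
    if even: "\<And>x. f (- x) = f x" for f :: "real \<Rightarrow> real"
  proof -
    have "f (a i0) = f \<bar>a i0\<bar>" "f (a j0) = f \<bar>a i0\<bar>"
      using even j0(2) by (auto simp: abs_if)
    moreover have "{..<n} = insert i0 (insert j0 R)" unfolding R_def using i0 j0 by auto
    ultimately show ?thesis
      using \<open>i0 \<noteq> j0\<close> unfolding \<open>{..<n} = insert i0 (insert j0 R)\<close> by (simp add: R_def)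
  qed
  show thesis by (rule that[OF sub card split])
qed

lemma sum_cosh_ge_card:
  fixes a :: "'i \<Rightarrow> real"
  assumes "finite R"
  shows "real (card R) \<le> (\<Sum>i\<in>R. cosh (a i))"
    and "(\<Sum>i\<in>R. cosh (a i)) = real (card R) \<longleftrightarrow> (\<forall>i\<in>R. a i = 0)"
proof -
  have nonneg: "0 \<le> cosh (a i) - 1" for i
    using cosh_real_ge_1[of "a i"] by simp
  have "(\<Sum>i\<in>R. cosh (a i)) = real (card R) + (\<Sum>i\<in>R. cosh (a i) - 1)"
    by (simp add: sum_subtractf)
  moreover have "(\<Sum>i\<in>R. cosh (a i) - 1) = 0 \<longleftrightarrow> (\<forall>i\<in>R. cosh (a i) - 1 = 0)"
    using assms nonneg by (intro sum_nonneg_eq_0_iff) auto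
  moreover have "cosh (a i) - 1 = 0 \<longleftrightarrow> a i = 0" for i
    using cosh_real_eq_iff[of "a i" 0] by simp
  moreover have "0 \<le> (\<Sum>i\<in>R. cosh (a i) - 1)"
    using nonneg by (intro sum_nonneg)
  ultimately show "real (card R) \<le> (\<Sum>i\<in>R. cosh (a i))"
    and "(\<Sum>i\<in>R. cosh (a i)) = real (card R) \<longleftrightarrow> (\<forall>i\<in>R. a i = 0)"
    by simp_all
qed

lemma symmetric_spectrum_split:
  fixes a :: "nat \<Rightarrow> real" and n D :: nat
  assumes n: "2 \<le> n" and D: "1 \<le> D"
    and symmetric: "\<And>i. i < n \<Longrightarrow> \<exists>j<n. a j = - a i"
    and growth: "\<And>j. (real n - 1) ^ (2 * j) \<le> (\<Sum>i<n. a i ^ (2 * (D * j)))"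
  obtains \<rho> R where "root D (real n - 1) \<le> \<rho>" "finite R" "card R = n - 2"
    "\<And>f :: real \<Rightarrow> real. (\<And>x. f (- x) = f x) \<Longrightarrow> (\<Sum>i<n. f (a i)) = 2 * f \<rho> + (\<Sum>i\<in>R. f (a i))"
proof -
  have fin: "finite ((\<lambda>i. \<bar>a i\<bar>) ` {..<n})" "(\<lambda>i. \<bar>a i\<bar>) ` {..<n} \<noteq> {}"
    using n by (auto simp: lessThan_empty_iff)
  obtain i0 where i0: "i0 < n" "\<bar>a i0\<bar> = Max ((\<lambda>i. \<bar>a i\<bar>) ` {..<n})"
    using Max_in[OF fin] by auto
  have "real n - 1 \<le> \<bar>a i0\<bar> ^ D"
    unfolding i0(2) using n growth
    by (intro power_Max_abs_ge_if_power_sums_ge) (auto simp: lessThan_empty_iff)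
  then have "root D (real n - 1) \<le> root D (\<bar>a i0\<bar> ^ D)"
    using D by (intro real_root_le_mono) auto
  also have "\<dots> = \<bar>a i0\<bar>"
    using D by (intro real_root_power_cancel) auto
  finally have radius: "root D (real n - 1) \<le> \<bar>a i0\<bar>" .
  moreover have "1 \<le> root D (real n - 1)" using D n by (simp add: real_root_ge_1_iff)
  ultimately have "a i0 \<noteq> 0" by auto
  then obtain R where R: "R \<subseteq> {..<n}" "card R = n - 2"
    and split: "\<And>f :: real \<Rightarrow> real. (\<And>x. f (- x) = f x) \<Longrightarrow> (\<Sum>i<n. f (a i)) = 2 * f \<bar>a i0\<bar> + (\<Sum>i\<in>R. f (a i))"
    using sum_even_split_symmetric[OF symmetric i0(1) \<open>a i0 \<noteq> 0\<close>] by blast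
  have "finite R" using R(1) finite_subset by blast
  show thesis by (rule that[OF radius \<open>finite R\<close> R(2) split])
qed

lemma symmetric_spectrum_bounds:
  fixes a :: "nat \<Rightarrow> real" and n D :: nat
  assumes n: "2 \<le> n" and D: "1 \<le> D"
    and odd_sums: "\<And>k. odd k \<Longrightarrow> (\<Sum>i<n. a i ^ k) = 0"
    and symmetric: "\<And>i. i < n \<Longrightarrow> \<exists>j<n. a j = - a i"
    and growth: "\<And>j. (real n - 1) ^ (2 * j) \<le> (\<Sum>i<n. a i ^ (2 * (D * j)))"
  defines "r \<equiv> root D (real n - 1)"
  shows "2 * cosh r + (real n - 2) \<le> (\<Sum>i<n. exp (a i))"
    and "2 * r\<^sup>2 \<le> (\<Sum>i<n. (a i)\<^sup>2)"
    and "(\<Sum>i<n. exp (a i)) = 2 * cosh r + (real n - 2) \<longleftrightarrow> (\<Sum>i<n. (a i)\<^sup>2) = 2 * r\<^sup>2"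
    and "(\<Sum>i<n. (a i)\<^sup>2) = 2 * r\<^sup>2 \<Longrightarrow> 1 \<le> k \<Longrightarrow> (\<Sum>i<n. a i ^ (2 * k)) = 2 * r ^ (2 * k)"
proof -
  obtain \<rho> R where "r \<le> \<rho>" "finite R" and card_R: "card R = n - 2"
    and split: "\<And>f :: real \<Rightarrow> real. (\<And>x. f (- x) = f x) \<Longrightarrow> (\<Sum>i<n. f (a i)) = 2 * f \<rho> + (\<Sum>i\<in>R. f (a i))"
    using symmetric_spectrum_split[OF n D symmetric growth] unfolding r_def by blast
  have "1 \<le> r" unfolding r_def using D n by (simp add: real_root_ge_1_iff)
  have exp_split: "(\<Sum>i<n. exp (a i)) = 2 * cosh \<rho> + (\<Sum>i\<in>R. cosh (a i))"
    using sum_exp_eq_sum_cosh[OF odd_sums] split[of cosh] by simp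
  have power_split: "(\<Sum>i<n. a i ^ (2 * k)) = 2 * \<rho> ^ (2 * k) + (\<Sum>i\<in>R. a i ^ (2 * k))" for k
    using split[of "\<lambda>x. x ^ (2 * k)"] by simp
  have "0 \<le> r" "0 \<le> \<rho>" using \<open>r \<le> \<rho>\<close> \<open>1 \<le> r\<close> by linarith+
  have cosh_le: "cosh r \<le> cosh \<rho>" and cosh_eq: "cosh r = cosh \<rho> \<longleftrightarrow> r = \<rho>"
    using \<open>r \<le> \<rho>\<close> \<open>0 \<le> r\<close> \<open>0 \<le> \<rho>\<close> by (simp_all add: cosh_real_nonneg_le_iff cosh_real_eq_iff)
  have sq_le: "r\<^sup>2 \<le> \<rho>\<^sup>2"
    using \<open>r \<le> \<rho>\<close> \<open>0 \<le> r\<close> by (intro power_mono)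
  have sq_eq: "r\<^sup>2 = \<rho>\<^sup>2 \<longleftrightarrow> r = \<rho>"
    using \<open>0 \<le> r\<close> \<open>0 \<le> \<rho>\<close> by (rule power2_eq_iff_nonneg)
  have cosh_R: "real n - 2 \<le> (\<Sum>i\<in>R. cosh (a i))"
    "(\<Sum>i\<in>R. cosh (a i)) = real n - 2 \<longleftrightarrow> (\<forall>i\<in>R. a i = 0)"
    using sum_cosh_ge_card[OF \<open>finite R\<close>, of a] card_R n by auto
  have sq_R: "0 \<le> (\<Sum>i\<in>R. (a i)\<^sup>2)" "(\<Sum>i\<in>R. (a i)\<^sup>2) = 0 \<longleftrightarrow> (\<forall>i\<in>R. a i = 0)"
    using \<open>finite R\<close> by (auto simp: sum_nonneg sum_nonneg_eq_0_iff)
  \<comment> \<open>the spectrum is \<open>{r, -r, 0, ..., 0}\<close>\<close>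
  define extremal where "extremal \<longleftrightarrow> \<rho> = r \<and> (\<forall>i\<in>R. a i = 0)"
  show "2 * cosh r + (real n - 2) \<le> (\<Sum>i<n. exp (a i))"
    using exp_split cosh_le cosh_R(1) by linarith
  have exp_extremal: "(\<Sum>i<n. exp (a i)) = 2 * cosh r + (real n - 2) \<longleftrightarrow> extremal"
  proof
    assume "(\<Sum>i<n. exp (a i)) = 2 * cosh r + (real n - 2)"
    then have "cosh r = cosh \<rho>" "(\<Sum>i\<in>R. cosh (a i)) = real n - 2"
      using exp_split cosh_le cosh_R(1) by linarith+
    then show extremal using cosh_eq cosh_R(2) by (auto simp: extremal_def)
  qed (use exp_split cosh_R(2) in \<open>simp add: extremal_def\<close>)
  show "2 * r\<^sup>2 \<le> (\<Sum>i<n. (a i)\<^sup>2)"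
    using power_split[of 1] sq_le sq_R(1) by simp
  have sq_extremal: "(\<Sum>i<n. (a i)\<^sup>2) = 2 * r\<^sup>2 \<longleftrightarrow> extremal"
  proof
    assume "(\<Sum>i<n. (a i)\<^sup>2) = 2 * r\<^sup>2"
    then have "r\<^sup>2 = \<rho>\<^sup>2" "(\<Sum>i\<in>R. (a i)\<^sup>2) = 0"
      using power_split[of 1] sq_le sq_R(1) by simp_all
    then show extremal using sq_eq sq_R(2) by (auto simp: extremal_def)
  qed (use power_split[of 1] sq_R(2) in \<open>simp add: extremal_def\<close>)
  show "(\<Sum>i<n. exp (a i)) = 2 * cosh r + (real n - 2) \<longleftrightarrow> (\<Sum>i<n. (a i)\<^sup>2) = 2 * r\<^sup>2"
    using exp_extremal sq_extremal by simp
  show "(\<Sum>i<n. a i ^ (2 * k)) = 2 * r ^ (2 * k)" if "(\<Sum>i<n. (a i)\<^sup>2) = 2 * r\<^sup>2" "1 \<le> k"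
    using that sq_extremal power_split[of k] by (simp add: extremal_def)
qed

section \<open>The extremal graphs\<close>

definition complete_bipartite :: "nat \<Rightarrow> (nat \<Rightarrow> nat \<Rightarrow> bool) \<Rightarrow> nat set \<Rightarrow> bool" where
  "complete_bipartite n E X \<longleftrightarrow> (\<forall>u v. u < n \<longrightarrow> v < n \<longrightarrow> (E u v \<longleftrightarrow> (u \<in> X) \<noteq> (v \<in> X)))"

lemma complete_bipartite_Compl: "complete_bipartite n E (- X) \<longleftrightarrow> complete_bipartite n E X"
  by (auto simp: complete_bipartite_def)

lemma is_star_iff_complete_bipartite: "is_star n E \<longleftrightarrow> (\<exists>c<n. complete_bipartite n E {c})"
proof -
  have "((u \<in> {c}) \<noteq> (v \<in> {c})) \<longleftrightarrow> u \<noteq> v \<and> (u = c \<or> v = c)" for u v c :: nat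
    by auto
  then show ?thesis unfolding is_star_def complete_bipartite_def by simp
qed

lemma is_star_if_complete_bipartite:
  assumes "complete_bipartite n E X" and "card {u. u < n \<and> u \<in> X} = 1"
  shows "is_star n E"
proof -
  obtain c where c: "{u. u < n \<and> u \<in> X} = {c}"
    using assms(2) card_1_singletonE by blast
  then have "c < n" and "\<And>u. u < n \<Longrightarrow> u \<in> X \<longleftrightarrow> u \<in> {c}"
    by blast+
  then show ?thesis
    using assms(1) unfolding is_star_iff_complete_bipartite complete_bipartite_def by auto
qed

lemma diameter_le_2_if_complete_bipartite:
  assumes cb: "complete_bipartite n E X" and x: "x < n" "x \<in> X" and y: "y < n" "y \<notin> X"
  shows "diameter n E \<le> 2"
proof (rule diameter_le)
  show "0 < n" using x by simp
  fix u v assume u: "u < n" and v: "v < n"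
  consider "u = v" | "(u \<in> X) \<noteq> (v \<in> X)" | "u \<noteq> v" "(u \<in> X) = (v \<in> X)" by blast
  then show "graph_dist n E u v \<le> 2"
  proof cases
    case 1
    then show ?thesis using graph_dist_le_if_walk[of n E "[u]"] u by (simp add: is_walk_singleton)
  next
    case 2
    then have "E u v" using cb u v by (simp add: complete_bipartite_def)
    then show ?thesis
      using graph_dist_le_if_walk[of n E "[u, v]"] u v by (simp add: is_walk_Cons is_walk_singleton)
  next
    case 3
    define w where "w = (if u \<in> X then y else x)"
    have "w < n" "E u w" "E w v"
      using cb u v x y 3 by (auto simp: w_def complete_bipartite_def)
    then show ?thesis
      using graph_dist_le_if_walk[of n E "[u, w, v]"] u v by (simp add: is_walk_Cons is_walk_singleton)
  qed
qed

lemma closed_walks_2_complete_bipartite: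
  assumes "simple_graph n E" and "complete_bipartite n E X"
  shows "closed_walks n E 2 = 2 * real (card {u. u < n \<and> u \<in> X}) * real (card {u. u < n \<and> u \<notin> X})"
proof -
  let ?A = "{u. u < n \<and> u \<in> X}" and ?B = "{u. u < n \<and> u \<notin> X}"
  have "real (degree n E u) = (if u \<in> X then real (card ?B) else real (card ?A))" if "u < n" for u
  proof -
    have "{v. v < n \<and> E u v} = (if u \<in> X then ?B else ?A)"
      using assms(2) that by (auto simp: complete_bipartite_def)
    then show ?thesis by (simp add: degree_def)
  qed
  then have "closed_walks n E 2 = (\<Sum>u<n. if u \<in> X then real (card ?B) else real (card ?A))"
    unfolding closed_walks_2[OF assms(1)] by (intro sum.cong) auto
  also have "\<dots> = (\<Sum>u\<in>?A. real (card ?B)) + (\<Sum>u\<in>?B. real (card ?A))"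
  proof -
    have "{..<n} \<inter> {u. u \<in> X} = ?A" "{..<n} \<inter> - {u. u \<in> X} = ?B" by auto
    then show ?thesis by (simp add: sum.If_cases)
  qed
  finally show ?thesis by simp
qed

lemma walks_3_eq_if_closed_walks:
  assumes simple: "simple_graph n E"
    and "closed_walks n E 2 = 2 * r ^ 2" "closed_walks n E 4 = 2 * r ^ 4" "closed_walks n E 6 = 2 * r ^ 6"
    and "u < n" "v < n"
  shows "walks n E 3 u v = r\<^sup>2 * adj E u v"
proof -
  let ?X = "walks n E 3" and ?Y = "walks n E 1"
  have sq: "(x - r\<^sup>2 * y)\<^sup>2 = x * x - 2 * r\<^sup>2 * (x * y) + r ^ 4 * (y * y)" for x y :: real
    by (simp add: power2_eq_square algebra_simps power4_eq_xxxx)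
  have "closed_walks n E 6 = (\<Sum>u<n. \<Sum>v<n. ?X u v * ?X u v)"
    "closed_walks n E 4 = (\<Sum>u<n. \<Sum>v<n. ?X u v * ?Y u v)"
    "closed_walks n E 2 = (\<Sum>u<n. \<Sum>v<n. ?Y u v * ?Y u v)"
    using closed_walks_add[OF simple, of 3 3] closed_walks_add[OF simple, of 3 1]
      closed_walks_add[OF simple, of 1 1]
    by (simp_all add: eval_nat_numeral del: walks.simps)
  then have "(\<Sum>u<n. \<Sum>v<n. (?X u v - r\<^sup>2 * ?Y u v)\<^sup>2)
      = closed_walks n E 6 - 2 * r\<^sup>2 * closed_walks n E 4 + r ^ 4 * closed_walks n E 2"
    unfolding sq by (simp only: sum.distrib sum_subtractf sum_distrib_left)
  also have "\<dots> = 0"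
    using assms(2-4) by (simp add: algebra_simps power_numeral_reduce)
  finally have "(\<Sum>u<n. \<Sum>v<n. (?X u v - r\<^sup>2 * ?Y u v)\<^sup>2) = 0" .
  then have "\<forall>u\<in>{..<n}. (\<Sum>v<n. (?X u v - r\<^sup>2 * ?Y u v)\<^sup>2) = 0"
    by (subst (asm) sum_nonneg_eq_0_iff) (auto intro: sum_nonneg)
  then have "\<forall>v\<in>{..<n}. (?X u v - r\<^sup>2 * ?Y u v)\<^sup>2 = 0"
    using assms(5) by (subst (asm) sum_nonneg_eq_0_iff) auto
  then show ?thesis using assms(5,6) walks_Suc_0[of u n E v] by simp
qed

lemma walks_odd_eq:
  assumes walks_3: "\<And>u v. u < n \<Longrightarrow> v < n \<Longrightarrow> walks n E 3 u v = c * adj E u v"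
    and "u < n" "v < n"
  shows "walks n E (2 * k + 1) u v = c ^ k * adj E u v"
  using assms(3)
proof (induction k arbitrary: v)
  case 0
  then show ?case using walks_Suc_0[OF assms(2)] by simp
next
  case (Suc k)
  have "walks n E (2 * Suc k + 1) u v = walks n E (2 * k + 3) u v"
    by (rule arg_cong[of _ _ "\<lambda>m. walks n E m u v"]) simp
  also have "\<dots> = (\<Sum>w<n. walks n E (2 * k) u w * walks n E 3 w v)"
    by (rule walks_add[OF Suc.prems])
  also have "\<dots> = c * (\<Sum>w<n. walks n E (2 * k) u w * adj E w v)"
    using walks_3 Suc.prems by (simp add: sum_distrib_left mult.left_commute del: walks.simps)
  also have "(\<Sum>w<n. walks n E (2 * k) u w * adj E w v) = walks n E (2 * k + 1) u v"
    by simp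
  also have "\<dots> = c ^ k * adj E u v"
    using Suc by simp
  finally show ?case by simp
qed

lemma complete_bipartite_if_odd_walks:
  assumes con: "connected_graph n E" and bip: "bipartition n E X"
    and odd_walks: "\<And>k u v. u < n \<Longrightarrow> v < n \<Longrightarrow> walks n E (2 * k + 1) u v = c k * adj E u v"
  shows "complete_bipartite n E X"
  unfolding complete_bipartite_def
proof (intro allI impI)
  fix u v assume u: "u < n" and v: "v < n"
  show "E u v \<longleftrightarrow> (u \<in> X) \<noteq> (v \<in> X)"
  proof
    assume "E u v"
    then show "(u \<in> X) \<noteq> (v \<in> X)" using bip u v by (auto simp: bipartition_def)
  next
    assume sides: "(u \<in> X) \<noteq> (v \<in> X)"
    obtain xs where xs: "is_walk n E xs" "hd xs = u" "last xs = v"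
      using con u v unfolding connected_graph_def by blast
    define d where "d = length xs - 1"
    have walk: "1 \<le> walks n E d u v"
      using walks_ge_1_if_walk[OF xs(1)] xs(2,3) by (simp add: d_def)
    then have "odd d" using walks_nonzero_parity[OF bip u v] sides by auto
    then obtain k where "d = 2 * k + 1" by (rule oddE)
    then have "adj E u v \<noteq> 0" using walk odd_walks[OF u v, of k] by auto
    then show "E u v" by (simp add: adj_def split: if_splits)
  qed
qed

lemma diameter_ge_2_if_complete_bipartite:
  assumes "connected_graph n E" "complete_bipartite n E X" and "2 \<le> card {u. u < n \<and> u \<in> X}"
  shows "2 \<le> diameter n E"
proof -
  let ?A = "{u. u < n \<and> u \<in> X}"
  have "?A \<noteq> {}" using assms(3) by (metis card.empty not_numeral_le_zero)
  then obtain x1 where x1: "x1 \<in> ?A" by blast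
  have "1 \<le> card (?A - {x1})"
    using assms(3) x1 by (simp add: card_Diff_singleton)
  then obtain x2 where x2: "x2 \<in> ?A" "x2 \<noteq> x1"
    by (metis Diff_iff card.empty ex_in_conv insertI1 not_one_le_zero)
  have "\<not> E x1 x2" using assms(2) x1 x2 by (auto simp: complete_bipartite_def)
  then have "\<not> diameter n E \<le> 1"
    using edge_if_diameter_le_1[OF assms(1)] x1 x2 by blast
  then show ?thesis by simp
qed

lemma is_star_if_closed_walks_extremal:
  assumes simple: "simple_graph n E" and con: "connected_graph n E" and bip: "bipartition n E X"
    and r: "1 \<le> r" "r ^ diameter n E = real n - 1"
    and extremal: "\<And>k. 1 \<le> k \<Longrightarrow> closed_walks n E (2 * k) = 2 * r ^ (2 * k)"
  shows "is_star n E"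
proof -
  have "walks n E 3 u v = r\<^sup>2 * adj E u v" if "u < n" "v < n" for u v
    using walks_3_eq_if_closed_walks[OF simple _ _ _ that] extremal[of 1] extremal[of 2] extremal[of 3]
    by simp
  then have cb: "complete_bipartite n E X"
    using complete_bipartite_if_odd_walks[OF con bip, of "\<lambda>k. (r\<^sup>2) ^ k"] walks_odd_eq by blast
  define a where "a = card {u. u < n \<and> u \<in> X}"
  define b where "b = card {u. u < n \<and> u \<notin> X}"
  have ab: "real a * real b = r\<^sup>2"
    using closed_walks_2_complete_bipartite[OF simple cb] extremal[of 1] by (simp add: a_def b_def)
  have "{u. u < n \<and> u \<in> X} \<union> {u. u < n \<and> u \<notin> X} = {..<n}" by auto
  then have "a + b = n"
    unfolding a_def b_def by (subst card_Un_disjoint[symmetric]) auto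
  show ?thesis
  proof (rule ccontr)
    assume "\<not> is_star n E"
    then have "a \<noteq> 1" "b \<noteq> 1"
      using is_star_if_complete_bipartite[of n E X] is_star_if_complete_bipartite[of n E "- X"] cb
      by (auto simp: a_def b_def complete_bipartite_Compl)
    moreover have "0 < r\<^sup>2" using r(1) by (intro zero_less_power) linarith
    then have "real a * real b \<noteq> 0" using ab by simp
    then have "a \<noteq> 0" "b \<noteq> 0" by auto
    ultimately have two: "2 \<le> a" "2 \<le> b" by auto
    then have "r\<^sup>2 \<le> r ^ diameter n E"
      using diameter_ge_2_if_complete_bipartite[OF con cb] r(1) by (intro power_increasing) (auto simp: a_def)
    then have "r\<^sup>2 \<le> real a + real b - 1"
      using r(2) \<open>a + b = n\<close> by (simp flip: of_nat_add)
    moreover have "1 * 1 \<le> (real a - 1) * (real b - 1)"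
      using two by (intro mult_mono) auto
    ultimately show False using ab by (simp add: algebra_simps)
  qed
qed

lemma closed_walks_2_star:
  assumes "simple_graph n E" and "is_star n E"
  shows "closed_walks n E 2 = 2 * (real n - 1)"
proof -
  obtain c where c: "c < n" "complete_bipartite n E {c}"
    using assms(2) by (auto simp: is_star_iff_complete_bipartite)
  have "{u. u < n \<and> u \<in> {c}} = {c}" "{u. u < n \<and> u \<notin> {c}} = {..<n} - {c}"
    using c(1) by auto
  then show ?thesis
    using closed_walks_2_complete_bipartite[OF assms(1) c(2)] c(1) by (simp add: of_nat_diff)
qed

lemma diameter_le_2_if_star:
  assumes "is_star n E" and "2 \<le> n"
  shows "diameter n E \<le> 2"
proof -
  obtain c where c: "c < n" "complete_bipartite n E {c}"
    using assms(1) by (auto simp: is_star_iff_complete_bipartite)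
  define y where "y = (if c = 0 then 1 else 0 :: nat)"
  have "y < n" "y \<notin> {c}" using assms(2) by (auto simp: y_def)
  then show ?thesis using diameter_le_2_if_complete_bipartite[OF c(2)] c(1) by blast
qed

theorem mainTheorem11:
  fixes n :: nat and E :: "nat \<Rightarrow> nat \<Rightarrow> bool"
  assumes "simple_graph n E" and "connected_graph n E" and "bipartite n E" and "n \<ge> 2"
  shows "estrada_index n E \<ge> 2 * cosh (root (diameter n E) (real n - 1)) + (real n - 2)
         \<and> (estrada_index n E = 2 * cosh (root (diameter n E) (real n - 1)) + (real n - 2)
             \<longleftrightarrow> is_star n E)"
proof -
  obtain X where bip: "bipartition n E X"
    using assms(3) by (auto simp: bipartite_iff_bipartition)
  define D where "D = diameter n E"
  define r where "r = root D (real n - 1)"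
  have D: "1 \<le> D" unfolding D_def using diameter_pos assms(2,4) .
  have r: "1 \<le> r" "r ^ D = real n - 1"
    unfolding r_def using D assms(4) by (simp_all add: real_root_ge_1_iff)
  obtain a where power_sums: "\<And>k. (\<Sum>i<n. a i ^ k) = closed_walks n E k"
    and estrada: "estrada_index n E = (\<Sum>i<n. exp (a i))"
    and symmetric: "\<And>i. i < n \<Longrightarrow> \<exists>j<n. a j = - a i"
    using real_adjacency_spectrum[OF assms(1) bip] by blast
  have odd_sums: "\<And>k. odd k \<Longrightarrow> (\<Sum>i<n. a i ^ k) = 0"
    using closed_walks_odd[OF bip] power_sums by simp
  have growth: "\<And>j. (real n - 1) ^ (2 * j) \<le> (\<Sum>i<n. a i ^ (2 * (D * j)))"
    using closed_walks_diameter[OF assms(1,2,4)] power_sums by (simp add: D_def)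
  note bounds = symmetric_spectrum_bounds[OF assms(4) D odd_sums symmetric growth, folded r_def,
      unfolded power_sums estrada[symmetric]]
  have "closed_walks n E 2 = 2 * r\<^sup>2 \<longleftrightarrow> is_star n E"
  proof
    assume "closed_walks n E 2 = 2 * r\<^sup>2"
    then show "is_star n E"
      using is_star_if_closed_walks_extremal[OF assms(1,2) bip r(1) r(2)[unfolded D_def]] bounds(4)
      by blast
  next
    assume star: "is_star n E"
    have "r ^ D \<le> r\<^sup>2"
      using diameter_le_2_if_star[OF star assms(4)] r(1) by (simp add: D_def power_increasing)
    then show "closed_walks n E 2 = 2 * r\<^sup>2"
      using closed_walks_2_star[OF assms(1) star] bounds(2) r(2) by simp
  qed
  then show ?thesis using bounds(1,3) unfolding r_def D_def by simp
qed

end
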